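(* Let $\sigma$ be a super filling of $\mathrm{dg}(\lambda)$ (order $<_2$) that is not $\Phi$-trivial, with distinguished label $a$, and let $r$ be the row of its distinguished cell. Let $u$ be any cell in row $r$ with $|\sigma(u)|=a$. Then $\mathrm{maj}(\Phi_u(\sigma))=\mathrm{maj}(\sigma)+1$ if $\sigma(u)=a$, and $\mathrm{maj}(\Phi_u(\sigma))=\mathrm{maj}(\sigma)-1$ if $\sigma(u)=\bar a$.
   Context: Let $\lambda=(\lambda_1\ge\dots\ge\lambda_k>0)$ be a partition; $\mathrm{dg}(\lambda)=\{(r,i):1\le i\le k,1\le r\le\lambda_i\}$, $(r,i)$ being row $r$ from the bottom and column $i$ from the left (columns bottom-justified of heights $\lambda_i$); $\mathrm{leg}((r,i))=\lambda_i-r$. $\mathcal A=\{1,\bar1,2,\bar2,\dots\}$ consists of positive letters $i$ and negative letters $\bar i$, $|i|=|\bar i|=i$, totally ordered by $<_2$: $0<1<2<3<\cdots<\bar3<\bar2<\bar1$. $I(a,b)=1$ if $a>b$ or $a=b$ is negative, and $I(a,b)=0$ if $a<b$ or $a=b$ is positive. A super filling is $\sigma:\mathrm{dg}(\lambda)\to\mathcal A$; a cell $u=(r,i)$, $r>1$, is a descent if $I(\sigma(u),\sigma((r-1,i)))=1$, and $\mathrm{maj}(\sigma)=\sum_{\text{descents }u}(\mathrm{leg}(u)+1)$. The reading order goes through rows top to bottom, each row right to left. $\Phi_u(\sigma)$ changes the sign ($i\leftrightarrow\bar i$) of the entry in cell $u$. The distinguished label of $\sigma$ is the smallest positive integer $a$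 such that some cell $(r,j)$ has $|\sigma((r,j))|=a$ and $r>a$; if no such $a$ exists, $\sigma$ is $\Phi$-trivial. If $a$ exists, the distinguished cell is the first cell in reading order whose entry has absolute value $a$. *)

theory Defs
  imports Main
begin

text \<open>Letters: Pos i is the positive letter i, Neg i is the negative letter bar i (i \<ge> 1).\<close>
datatype letter = Pos nat | Neg nat

fun absl :: "letter \<Rightarrow> nat" where
  "absl (Pos i) = i" | "absl (Neg i) = i"

fun is_neg :: "letter \<Rightarrow> bool" where
  "is_neg (Pos i) = False" | "is_neg (Neg i) = True"

fun flip :: "letter \<Rightarrow> letter" where
  "flip (Pos i) = Neg i" | "flip (Neg i) = Pos i"

fun lt2 :: "letter \<Rightarrow> letter \<Rightarrow> bool" where
  "lt2 (Pos i) (Pos j) = (i < j)"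
| "lt2 (Pos i) (Neg j) = True"
| "lt2 (Neg i) (Pos j) = False"
| "lt2 (Neg i) (Neg j) = (j < i)"

definition Iind :: "letter \<Rightarrow> letter \<Rightarrow> bool" where
  "Iind a b \<longleftrightarrow> lt2 b a \<or> (a = b \<and> is_neg a)"

definition is_partition :: "nat list \<Rightarrow> bool" where
  "is_partition lam \<longleftrightarrow> sorted_wrt (\<ge>) lam \<and> (\<forall>x\<in>set lam. x > 0)"

text \<open>Cells are pairs (r, i): row r from the bottom, column i from the left (both 1-based);
  column i has height lambda_i = lam ! (i - 1).\<close>
definition dg :: "nat list \<Rightarrow> (nat \<times> nat) set" where
  "dg lam = {(r, i). 1 \<le> i \<and> i \<le> length lam \<and> 1 \<le> r \<and> r \<le> lam ! (i - 1)}"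

definition leg :: "nat list \<Rightarrow> nat \<times> nat \<Rightarrow> nat" where
  "leg lam u = lam ! (snd u - 1) - fst u"

definition super_filling :: "nat list \<Rightarrow> (nat \<times> nat \<Rightarrow> letter) \<Rightarrow> bool" where
  "super_filling lam \<sigma> \<longleftrightarrow> (\<forall>u\<in>dg lam. absl (\<sigma> u) \<ge> 1)"

definition is_descent :: "nat list \<Rightarrow> (nat \<times> nat \<Rightarrow> letter) \<Rightarrow> nat \<times> nat \<Rightarrow> bool" where
  "is_descent lam \<sigma> u \<longleftrightarrow> u \<in> dg lam \<and> fst u > 1 \<and> Iind (\<sigma> u) (\<sigma> (fst u - 1, snd u))"

definition maj :: "nat list \<Rightarrow> (nat \<times> nat \<Rightarrow> letter) \<Rightarrow> nat" where
  "maj lam \<sigma> = (\<Sum>u\<in>{u\<in>dg lam. is_descent lam \<sigma> u}. leg lam u + 1)"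

definition Phi :: "nat \<times> nat \<Rightarrow> (nat \<times> nat \<Rightarrow> letter) \<Rightarrow> (nat \<times> nat \<Rightarrow> letter)" where
  "Phi u \<sigma> = \<sigma>(u := flip (\<sigma> u))"

definition reading_before :: "nat \<times> nat \<Rightarrow> nat \<times> nat \<Rightarrow> bool" where
  "reading_before c d \<longleftrightarrow> fst c > fst d \<or> (fst c = fst d \<and> snd c > snd d)"

definition label_candidate :: "nat list \<Rightarrow> (nat \<times> nat \<Rightarrow> letter) \<Rightarrow> nat \<Rightarrow> bool" where
  "label_candidate lam \<sigma> a \<longleftrightarrow> a > 0 \<and> (\<exists>c\<in>dg lam. absl (\<sigma> c) = a \<and> fst c > a)"

definition phi_trivial :: "nat list \<Rightarrow> (nat \<times> nat \<Rightarrow> letter) \<Rightarrow> bool" where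
  "phi_trivial lam \<sigma> \<longleftrightarrow> \<not> (\<exists>a. label_candidate lam \<sigma> a)"

definition dist_label :: "nat list \<Rightarrow> (nat \<times> nat \<Rightarrow> letter) \<Rightarrow> nat" where
  "dist_label lam \<sigma> = (LEAST a. label_candidate lam \<sigma> a)"

definition dist_cell :: "nat list \<Rightarrow> (nat \<times> nat \<Rightarrow> letter) \<Rightarrow> nat \<times> nat" where
  "dist_cell lam \<sigma> = (THE c. c \<in> dg lam \<and> absl (\<sigma> c) = dist_label lam \<sigma> \<and>
      (\<forall>d\<in>dg lam. absl (\<sigma> d) = dist_label lam \<sigma> \<longrightarrow> d \<noteq> c \<longrightarrow> reading_before c d))"

end

theory Submission
  imports Defs "HOL-Library.Product_Lexorder"
begin

text \<open>Let \<open>r\<close> be the row of the distinguished cell and \<open>a\<close> the distinguished label. Every entry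
  directly below a cell of row \<open>r\<close> has absolute value at least \<open>a\<close> (a smaller one would be a smaller
  label candidate), and every entry directly above has absolute value larger than \<open>a\<close> (\<open>a\<close> does not
  occur above row \<open>r\<close>, and a smaller value would again be a candidate). Against such neighbours
  the letter \<open>a\<close> is never a descent over the entry below and the entry above always descends over it,
  while \<open>bar a\<close> behaves the opposite way. Changing \<open>a\<close> into \<open>bar a\<close> therefore creates the descent
  at \<open>u\<close>, of weight \<open>leg u + 1\<close>, and destroys the one above \<open>u\<close>, of weight \<open>leg u\<close> (if there is
  no cell above, \<open>leg u = 0\<close>). The reverse change follows because \<open>Phi u\<close> is an involution.\<close>

lemma flip_flip [simp]: "flip (flip x) = x"
  by (cases x) simp_all

lemma Phi_Phi [simp]: "Phi u (Phi u \<sigma>) = \<sigma>"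
  by (simp add: Phi_def)

lemma not_Iind_Pos_if_le_absl: "a \<le> absl y \<Longrightarrow> \<not> Iind (Pos a) y"
  by (cases y) (auto simp: Iind_def)

lemma Iind_Neg_if_le_absl: "a \<le> absl y \<Longrightarrow> Iind (Neg a) y"
  by (cases y) (auto simp: Iind_def)

lemma Iind_Pos_if_absl_gt: "a < absl x \<Longrightarrow> Iind x (Pos a)"
  by (cases x) (auto simp: Iind_def)

lemma not_Iind_Neg_if_absl_gt: "a < absl x \<Longrightarrow> \<not> Iind x (Neg a)"
  by (cases x) (auto simp: Iind_def)

lemma finite_dg: "finite (dg lam)"
proof (rule finite_subset)
  show "dg lam \<subseteq> {..sum_list lam} \<times> {..length lam}"
  proof
    fix v assume "v \<in> dg lam"
    then obtain r i where v: "v = (r, i)" "1 \<le> i" "i \<le> length lam" "r \<le> lam ! (i - 1)"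
      by (auto simp: dg_def)
    moreover have "lam ! (i - 1) \<le> sum_list lam"
      using v by (intro elem_le_sum_list) auto
    ultimately show "v \<in> {..sum_list lam} \<times> {..length lam}" by auto
  qed
qed simp

lemma leg_eq_Suc_leg_above:
  assumes "(r, i) \<in> dg lam"
  shows "leg lam (r, i) = (if (Suc r, i) \<in> dg lam then Suc (leg lam (Suc r, i)) else 0)"
  using assms by (auto simp: leg_def dg_def)

definition descent_weight :: "nat list \<Rightarrow> (nat \<times> nat \<Rightarrow> letter) \<Rightarrow> nat \<times> nat \<Rightarrow> nat" where
  "descent_weight lam \<sigma> v = (if is_descent lam \<sigma> v then leg lam v + 1 else 0)"

lemma maj_eq_sum_descent_weight: "maj lam \<sigma> = (\<Sum>v\<in>dg lam. descent_weight lam \<sigma> v)"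
  unfolding maj_def descent_weight_def by (rule sum.inter_filter[OF finite_dg])

lemma descent_weight_outside_dg: "v \<notin> dg lam \<Longrightarrow> descent_weight lam \<sigma> v = 0"
  by (simp add: descent_weight_def is_descent_def)

lemma maj_diff_if_descents_agree_off:
  assumes "u \<noteq> w" and agree: "\<And>v. v \<noteq> u \<Longrightarrow> v \<noteq> w \<Longrightarrow> is_descent lam \<sigma>' v = is_descent lam \<sigma> v"
  shows "int (maj lam \<sigma>') = int (maj lam \<sigma>)
           + (int (descent_weight lam \<sigma>' u) - int (descent_weight lam \<sigma> u))
           + (int (descent_weight lam \<sigma>' w) - int (descent_weight lam \<sigma> w))"
proof -
  define f where "f v = int (descent_weight lam \<sigma>' v) - int (descent_weight lam \<sigma> v)" for v
  have f_zero: "f v = 0" if "v \<notin> dg lam \<inter> {u, w}" for v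
    using that agree[of v] unfolding f_def descent_weight_def by (auto simp: is_descent_def)
  have "int (maj lam \<sigma>') - int (maj lam \<sigma>) = (\<Sum>v\<in>dg lam. f v)"
    by (simp add: maj_eq_sum_descent_weight f_def sum_subtractf)
  also have "\<dots> = (\<Sum>v\<in>dg lam \<inter> {u, w}. f v)"
    using f_zero by (intro sum.mono_neutral_right finite_dg) auto
  also have "\<dots> = (\<Sum>v\<in>{u, w}. f v)"
    using f_zero by (intro sum.mono_neutral_left) auto
  finally show ?thesis
    using \<open>u \<noteq> w\<close> by (simp add: f_def)
qed

lemma is_descent_Phi_off:
  assumes "v \<noteq> u" "v \<noteq> (Suc (fst u), snd u)"
  shows "is_descent lam (Phi u \<sigma>) v = is_descent lam \<sigma> v"
proof -
  have "1 < fst v \<Longrightarrow> (fst v - 1, snd v) \<noteq> u"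
    using assms by (cases u, cases v) auto
  then show ?thesis
    using assms(1) by (auto simp: is_descent_def Phi_def)
qed

lemma maj_Phi_Pos:
  assumes "u \<in> dg lam" "1 < fst u" "\<sigma> u = Pos a"
    and below: "a \<le> absl (\<sigma> (fst u - 1, snd u))"
    and above: "(Suc (fst u), snd u) \<in> dg lam \<Longrightarrow> a < absl (\<sigma> (Suc (fst u), snd u))"
  shows "int (maj lam (Phi u \<sigma>)) = int (maj lam \<sigma>) + 1"
proof -
  obtain r i where u: "u = (r, i)" by (cases u)
  define w where "w = (Suc r, i)"
  have u_ne_w: "u \<noteq> w" by (simp add: u w_def)
  have maj_diff: "int (maj lam (Phi u \<sigma>)) = int (maj lam \<sigma>)
      + (int (descent_weight lam (Phi u \<sigma>) u) - int (descent_weight lam \<sigma> u))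
      + (int (descent_weight lam (Phi u \<sigma>) w) - int (descent_weight lam \<sigma> w))"
    using u_ne_w is_descent_Phi_off[of _ u lam \<sigma>]
    by (intro maj_diff_if_descents_agree_off) (auto simp: u w_def)
  have at_u: "descent_weight lam (Phi u \<sigma>) u = leg lam u + 1" "descent_weight lam \<sigma> u = 0"
    using assms(1-3) not_Iind_Pos_if_le_absl[OF below] Iind_Neg_if_le_absl[OF below]
    by (auto simp: descent_weight_def is_descent_def Phi_def u)
  show ?thesis
  proof (cases "w \<in> dg lam")
    case True
    have "descent_weight lam (Phi u \<sigma>) w = 0" "descent_weight lam \<sigma> w = leg lam w + 1"
      using True assms(2,3) Iind_Pos_if_absl_gt[OF above] not_Iind_Neg_if_absl_gt[OF above]
      by (auto simp: descent_weight_def is_descent_def Phi_def u w_def)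
    with maj_diff at_u True leg_eq_Suc_leg_above[of r i lam] assms(1) show ?thesis
      by (simp add: u w_def)
  next
    case False
    with maj_diff at_u leg_eq_Suc_leg_above[of r i lam] assms(1) show ?thesis
      by (simp add: descent_weight_outside_dg u w_def)
  qed
qed

lemma maj_Phi_Neg:
  assumes "u \<in> dg lam" "1 < fst u" "\<sigma> u = Neg a"
    and "a \<le> absl (\<sigma> (fst u - 1, snd u))"
    and "(Suc (fst u), snd u) \<in> dg lam \<Longrightarrow> a < absl (\<sigma> (Suc (fst u), snd u))"
  shows "int (maj lam (Phi u \<sigma>)) = int (maj lam \<sigma>) - 1"
proof -
  have "int (maj lam (Phi u (Phi u \<sigma>))) = int (maj lam (Phi u \<sigma>)) + 1"
    using assms by (intro maj_Phi_Pos) (auto simp: Phi_def)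
  then show ?thesis by simp
qed

lemma dist_label_candidate:
  "\<not> phi_trivial lam \<sigma> \<Longrightarrow> label_candidate lam \<sigma> (dist_label lam \<sigma>)"
  unfolding phi_trivial_def dist_label_def by (auto intro: LeastI_ex)

lemma dist_label_pos: "\<not> phi_trivial lam \<sigma> \<Longrightarrow> 0 < dist_label lam \<sigma>"
  using dist_label_candidate by (auto simp: label_candidate_def)

lemma not_label_candidate_below_dist_label:
  "b < dist_label lam \<sigma> \<Longrightarrow> \<not> label_candidate lam \<sigma> b"
  unfolding dist_label_def by (rule not_less_Least)

text \<open>With the lexicographic order on \<open>(row, column)\<close>, reading order is the reverse order, so the
  distinguished cell is the lexicographically largest cell carrying the distinguished label.\<close>

lemma dist_cell_eq_Max:
  assumes "d \<in> dg lam" "absl (\<sigma> d) = dist_label lam \<sigma>"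
  shows "dist_cell lam \<sigma> = Max {c \<in> dg lam. absl (\<sigma> c) = dist_label lam \<sigma>}"
proof -
  define A where "A = {c \<in> dg lam. absl (\<sigma> c) = dist_label lam \<sigma>}"
  have "finite A"
    using finite_dg by (simp add: A_def)
  have "A \<noteq> {}"
    using assms unfolding A_def by blast
  have reading_before_iff: "reading_before c d \<longleftrightarrow> d < c" for c d :: "nat \<times> nat"
    by (auto simp: reading_before_def less_prod_def')
  show ?thesis
    unfolding dist_cell_def A_def[symmetric]
  proof (rule the_equality)
    show "Max A \<in> dg lam \<and> absl (\<sigma> (Max A)) = dist_label lam \<sigma> \<and>
        (\<forall>d\<in>dg lam. absl (\<sigma> d) = dist_label lam \<sigma> \<longrightarrow> d \<noteq> Max A \<longrightarrow> reading_before (Max A) d)"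
      using Max_in[OF \<open>finite A\<close> \<open>A \<noteq> {}\<close>] Max_ge[OF \<open>finite A\<close>]
      by (auto simp: A_def reading_before_iff order.order_iff_strict)
  next
    fix c assume "c \<in> dg lam \<and> absl (\<sigma> c) = dist_label lam \<sigma> \<and>
        (\<forall>d\<in>dg lam. absl (\<sigma> d) = dist_label lam \<sigma> \<longrightarrow> d \<noteq> c \<longrightarrow> reading_before c d)"
    then have "c \<in> A" "\<forall>d\<in>A. d \<le> c"
      by (auto simp: A_def reading_before_iff order.order_iff_strict)
    with \<open>finite A\<close> show "c = Max A"
      by (intro antisym Max_ge Max.boundedI) auto
  qed
qed

lemma fst_le_fst_dist_cell:
  assumes "d \<in> dg lam" "absl (\<sigma> d) = dist_label lam \<sigma>"
  shows "fst d \<le> fst (dist_cell lam \<sigma>)"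
proof -
  have "d \<in> {c \<in> dg lam. absl (\<sigma> c) = dist_label lam \<sigma>}"
    using assms by simp
  then have "d \<le> dist_cell lam \<sigma>"
    unfolding dist_cell_eq_Max[OF assms] by (rule Max_ge[rotated]) (simp add: finite_dg)
  then show ?thesis by (auto simp: less_eq_prod_def)
qed

lemma dist_label_lt_row:
  assumes "\<not> phi_trivial lam \<sigma>" "u \<in> dg lam" "fst u = fst (dist_cell lam \<sigma>)"
  shows "dist_label lam \<sigma> < fst u"
proof -
  obtain c where "c \<in> dg lam" "absl (\<sigma> c) = dist_label lam \<sigma>" "dist_label lam \<sigma> < fst c"
    using dist_label_candidate[OF assms(1)] by (auto simp: label_candidate_def)
  with fst_le_fst_dist_cell[of c lam \<sigma>] assms(3) show ?thesis by simp
qed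

lemma dist_label_le_absl_below:
  assumes "super_filling lam \<sigma>" "\<not> phi_trivial lam \<sigma>" "u \<in> dg lam"
    and "fst u = fst (dist_cell lam \<sigma>)"
  shows "dist_label lam \<sigma> \<le> absl (\<sigma> (fst u - 1, snd u))"
proof (rule ccontr)
  let ?b = "absl (\<sigma> (fst u - 1, snd u))"
  assume small: "\<not> dist_label lam \<sigma> \<le> ?b"
  have "dist_label lam \<sigma> < fst u"
    using assms(2-4) by (rule dist_label_lt_row)
  with dist_label_pos[OF assms(2)] have below_dg: "(fst u - 1, snd u) \<in> dg lam"
    using assms(3) by (auto simp: dg_def)
  then have "1 \<le> ?b"
    using assms(1) by (simp add: super_filling_def)
  with below_dg small \<open>dist_label lam \<sigma> < fst u\<close> have "label_candidate lam \<sigma> ?b"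
    unfolding label_candidate_def by (intro conjI bexI[of _ "(fst u - 1, snd u)"]) auto
  with small not_label_candidate_below_dist_label show False by simp
qed

lemma dist_label_lt_absl_above:
  assumes "super_filling lam \<sigma>" "\<not> phi_trivial lam \<sigma>" "u \<in> dg lam"
    and "fst u = fst (dist_cell lam \<sigma>)" and above_dg: "(Suc (fst u), snd u) \<in> dg lam"
  shows "dist_label lam \<sigma> < absl (\<sigma> (Suc (fst u), snd u))"
proof -
  let ?b = "absl (\<sigma> (Suc (fst u), snd u))"
  have "?b \<noteq> dist_label lam \<sigma>"
    using fst_le_fst_dist_cell[of _ lam \<sigma>, OF above_dg] assms(4) by auto
  moreover have "\<not> ?b < dist_label lam \<sigma>"
  proof
    assume small: "?b < dist_label lam \<sigma>"
    have "dist_label lam \<sigma> < fst u"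
      using assms(2-4) by (rule dist_label_lt_row)
    have "1 \<le> ?b"
      using assms(1) above_dg by (simp add: super_filling_def)
    with above_dg small \<open>dist_label lam \<sigma> < fst u\<close> have "label_candidate lam \<sigma> ?b"
      unfolding label_candidate_def by (intro conjI bexI[of _ "(Suc (fst u), snd u)"]) auto
    with small not_label_candidate_below_dist_label show False by simp
  qed
  ultimately show ?thesis by simp
qed

theorem mainTheorem9:
  fixes lam :: "nat list" and \<sigma> :: "nat \<times> nat \<Rightarrow> letter" and u :: "nat \<times> nat"
  assumes "is_partition lam"
    and "super_filling lam \<sigma>"
    and "\<not> phi_trivial lam \<sigma>"
    and "u \<in> dg lam"
    and "fst u = fst (dist_cell lam \<sigma>)"
    and "absl (\<sigma> u) = dist_label lam \<sigma>"
  shows "(\<sigma> u = Pos (dist_label lam \<sigma>) \<longrightarrow>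
            int (maj lam (Phi u \<sigma>)) = int (maj lam \<sigma>) + 1)
       \<and> (\<sigma> u = Neg (dist_label lam \<sigma>) \<longrightarrow>
            int (maj lam (Phi u \<sigma>)) = int (maj lam \<sigma>) - 1)"
proof -
  have "0 < dist_label lam \<sigma>"
    using assms(3) by (rule dist_label_pos)
  moreover have "dist_label lam \<sigma> < fst u"
    using assms(3-5) by (rule dist_label_lt_row)
  ultimately have "1 < fst u" by simp
  moreover have "dist_label lam \<sigma> \<le> absl (\<sigma> (fst u - 1, snd u))"
    using assms(2-5) by (rule dist_label_le_absl_below)
  moreover have "(Suc (fst u), snd u) \<in> dg lam \<Longrightarrow>
      dist_label lam \<sigma> < absl (\<sigma> (Suc (fst u), snd u))"
    using assms(2-5) by (rule dist_label_lt_absl_above)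
  ultimately show ?thesis
    using assms(4) maj_Phi_Pos maj_Phi_Neg by blast
qed

end
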